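(* Suppose an SCF $f:\Theta\to Z$ is mixed-Nash-implemented by a mechanism $\mathcal M=\langle M,g\rangle$. Let $(i,\theta)\in\mathcal I\times\Theta$ and $\lambda\in MNE^{(\mathcal M,\theta)}$. If $f(\theta)\in\arg\min_{z\in Z}u_i^\theta(z)$ and $\mathcal L_i^Z(f(\theta),\theta)$ is an $i$-max set, then $$\bigcup_{m_i\in M_i}\mathrm{SUPP}\big[g(m_i,\lambda_{-i})\big]=\{f(\theta)\}.$$
   Context: Standing setup: $\mathcal I=\{1,\dots,I\}$ is a finite set of agents with $I\ge 3$; $\Theta$ is a finite or countably infinite set of states; $Z$ is a finite set of pure outcomes; $Y=\Delta(Z)$ is the set of lotteries on $Z$, and each $z\in Z$ is identified with the degenerate lottery at $z$. For each $(i,\theta)$, $u_i^\theta:Z\to\mathbb R$ is a Bernoulli utility and $U_i^\theta(y)=\sum_{z\in Z}y_z u_i^\theta(z)$ for $y\in Y$. For $\alpha\in Y$: $\mathcal L_i^Y(\alpha,\theta)=\{y\in Y:U_i^\theta(\alpha)\ge U_i^\theta(y)\}$ and $\mathcal L_i^Z(\alpha,\theta)=\{z\in Z:U_i^\theta(\alpha)\ge u_i^\theta(z)\}$. $\mathrm{SUPP}[\mu]$ is the support of a probability $\mu$. A mechanism is $\mathcal M=\langle M=\times_{i}M_i,\ g:M\to Y\rangle$ with each $M_i$ countable; for a profile of mixed strategies $\lambda=(\lambda_i)_i\in\times_i\Delta(M_i)$ (or a mixture of pure and mixed strategies, e.g. $(m_i,\lambda_{-i})$), $g(\lambda)$ denotes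 the induced lottery on $Z$. $PNE^{(\mathcal M,\theta)}$ and $MNE^{(\mathcal M,\theta)}$ are the sets of pure- and mixed-strategy Nash equilibria of $\mathcal M$ at $\theta$ (agents maximize $U_i^\theta$ of the induced lottery). An SCF $f:\Theta\to Z$ is mixed-Nash-implemented by $\mathcal M$ if $\bigcup_{\lambda\in MNE^{(\mathcal M,\theta)}}\mathrm{SUPP}(g[\lambda])=\{f(\theta)\}$ for all $\theta\in\Theta$. For $(i,\theta)$, a nonempty $E\subseteq Z$ is an $i$-$\theta$-max set if $E\subseteq\arg\max_{z\in E}u_i^\theta(z)$ and $E\subseteq\arg\max_{z\in Z}u_j^\theta(z)$ for all $j\ne i$; $E$ is an $i$-max set if it is an $i$-$\theta$-max set for some $\theta\in\Theta$. *)

theory Defs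
  imports "HOL-Probability.Probability"
begin

text \<open>Agents: a finite type 'ag (the set I = UNIV); states: countable type 'st;
pure outcomes: finite type 'z (Z = UNIV); lotteries: 'z pmf;
messages: each M i is a subset of a countable type 'm.
u i th z is the Bernoulli utility u_i^theta(z).\<close>

definition EU :: "('ag \<Rightarrow> 'st \<Rightarrow> 'z::finite \<Rightarrow> real) \<Rightarrow> 'ag \<Rightarrow> 'st \<Rightarrow> 'z pmf \<Rightarrow> real" where
  "EU u i th y = (\<Sum>z\<in>UNIV. pmf y z * u i th z)"

definition LZ :: "('ag \<Rightarrow> 'st \<Rightarrow> 'z::finite \<Rightarrow> real) \<Rightarrow> 'ag \<Rightarrow> 'z pmf \<Rightarrow> 'st \<Rightarrow> 'z set" where
  "LZ u i alpha th = {z. EU u i th alpha \<ge> u i th z}"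

definition argmax_on :: "('z \<Rightarrow> real) \<Rightarrow> 'z set \<Rightarrow> 'z set" where
  "argmax_on h S = {z\<in>S. \<forall>z'\<in>S. h z' \<le> h z}"

definition is_i_theta_max_set :: "('ag \<Rightarrow> 'st \<Rightarrow> 'z::finite \<Rightarrow> real) \<Rightarrow> 'ag \<Rightarrow> 'st \<Rightarrow> 'z set \<Rightarrow> bool" where
  "is_i_theta_max_set u i th E \<longleftrightarrow> E \<noteq> {} \<and> E \<subseteq> argmax_on (u i th) E
      \<and> (\<forall>j. j \<noteq> i \<longrightarrow> E \<subseteq> argmax_on (u j th) UNIV)"

definition is_i_max_set :: "('ag \<Rightarrow> 'st \<Rightarrow> 'z::finite \<Rightarrow> real) \<Rightarrow> 'ag \<Rightarrow> 'z set \<Rightarrow> bool" where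
  "is_i_max_set u i E \<longleftrightarrow> (\<exists>th. is_i_theta_max_set u i th E)"

definition mixed_profiles :: "('ag \<Rightarrow> 'm set) \<Rightarrow> ('ag \<Rightarrow> 'm pmf) set" where
  "mixed_profiles M = {lam. \<forall>i. set_pmf (lam i) \<subseteq> M i}"

definition induced :: "(('ag::finite \<Rightarrow> 'm) \<Rightarrow> 'z pmf) \<Rightarrow> ('ag \<Rightarrow> 'm pmf) \<Rightarrow> 'z pmf" where
  "induced g lam = bind_pmf (Pi_pmf UNIV undefined lam) g"

definition MNE :: "('ag \<Rightarrow> 'st \<Rightarrow> 'z::finite \<Rightarrow> real) \<Rightarrow> ('ag::finite \<Rightarrow> 'm set)
     \<Rightarrow> (('ag \<Rightarrow> 'm) \<Rightarrow> 'z pmf) \<Rightarrow> 'st \<Rightarrow> ('ag \<Rightarrow> 'm pmf) set" where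
  "MNE u M g th = {lam \<in> mixed_profiles M.
      \<forall>i. \<forall>mu. set_pmf mu \<subseteq> M i \<longrightarrow>
        EU u i th (induced g (lam(i := mu))) \<le> EU u i th (induced g lam)}"

definition mixed_nash_implements ::
  "('ag \<Rightarrow> 'st \<Rightarrow> 'z::finite \<Rightarrow> real) \<Rightarrow> ('ag::finite \<Rightarrow> 'm set)
     \<Rightarrow> (('ag \<Rightarrow> 'm) \<Rightarrow> 'z pmf) \<Rightarrow> ('st \<Rightarrow> 'z) \<Rightarrow> bool" where
  "mixed_nash_implements u M g f \<longleftrightarrow>
     (\<forall>th. (\<Union>lam\<in>MNE u M g th. set_pmf (induced g lam)) = {f th})"

end

theory Submission
  imports Defs
begin

text \<open>At \<open>\<theta>\<close> the equilibrium \<open>\<lambda>\<close> yields \<open>f \<theta>\<close> for sure, which is worst for agent \<open>i\<close>;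
so no deviation of \<open>i\<close>, pure or mixed, can put weight outside
\<open>E = L\<^sub>i\<^sup>Z(f \<theta>, \<theta>)\<close>. At a state \<open>\<theta>'\<close> witnessing that \<open>E\<close> is an \<open>i\<close>-max set,
agent \<open>i\<close> is indifferent on \<open>E\<close> and all other agents are at their optimum on \<open>E\<close>,
so \<open>\<lambda>\<close> with \<open>i\<close>'s strategy replaced by any \<open>\<mu>\<close> is a mixed equilibrium at \<open>\<theta>'\<close>.
Implementation at \<open>\<theta>'\<close> then forces all these profiles, \<open>\<lambda>\<close> itself included, to
yield \<open>f \<theta>' = f \<theta>\<close> for sure.\<close>

lemma EU_diff_const:
  "EU u i th y - b = (\<Sum>z\<in>UNIV. pmf y z * (u i th z - b))"
  by (simp add: EU_def right_diff_distrib sum_subtractf sum_distrib_right[symmetric] sum_pmf_eq_1)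

lemma EU_le_of_support:
  assumes "\<And>z. z \<in> set_pmf y \<Longrightarrow> u i th z \<le> b"
  shows "EU u i th y \<le> b"
proof -
  have "(\<Sum>z\<in>UNIV. pmf y z * (u i th z - b)) \<le> 0"
  proof (rule sum_nonpos)
    fix z show "pmf y z * (u i th z - b) \<le> 0"
      using assms[of z] by (cases "z \<in> set_pmf y") (auto simp: mult_nonneg_nonpos set_pmf_iff)
  qed
  then show ?thesis by (simp add: EU_diff_const[symmetric])
qed

lemma EU_ge_of_support:
  assumes "\<And>z. z \<in> set_pmf y \<Longrightarrow> b \<le> u i th z"
  shows "b \<le> EU u i th y"
proof -
  have "0 \<le> (\<Sum>z\<in>UNIV. pmf y z * (u i th z - b))"
  proof (rule sum_nonneg)
    fix z show "0 \<le> pmf y z * (u i th z - b)"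
      using assms[of z] by (cases "z \<in> set_pmf y") (auto simp: set_pmf_iff)
  qed
  then show ?thesis by (simp add: EU_diff_const[symmetric])
qed

lemma EU_eq_of_support:
  assumes "\<And>z. z \<in> set_pmf y \<Longrightarrow> u i th z = b"
  shows "EU u i th y = b"
  using EU_le_of_support[of y u i th b] EU_ge_of_support[of y b u i th] assms
  by (simp add: order_antisym)

lemma support_eq_min_if_EU_le_min:
  assumes min: "\<And>z. a \<le> u i th z" and "EU u i th y \<le> a" and z: "z \<in> set_pmf y"
  shows "u i th z = a"
proof -
  have nonneg: "0 \<le> pmf y w * (u i th w - a)" for w
    using min[of w] by simp
  have "(\<Sum>w\<in>UNIV. pmf y w * (u i th w - a)) \<le> 0"
    using \<open>EU u i th y \<le> a\<close> by (simp add: EU_diff_const[symmetric])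
  then have "(\<Sum>w\<in>UNIV. pmf y w * (u i th w - a)) = 0"
    by (simp add: order_antisym sum_nonneg nonneg)
  then have "pmf y z * (u i th z - a) = 0"
    by (simp add: sum_nonneg_eq_0_iff nonneg)
  then show ?thesis using z by (simp add: set_pmf_iff)
qed

lemma LZ_return_pmf: "LZ u i (return_pmf z0) th = {z. u i th z \<le> u i th z0}"
  by (simp add: LZ_def EU_def)

lemma set_pmf_induced_if_implements:
  assumes "mixed_nash_implements u M g f" and "l \<in> MNE u M g t"
  shows "set_pmf (induced g l) = {f t}"
proof -
  have "set_pmf (induced g l) \<subseteq> {f t}"
    using assms by (auto simp: mixed_nash_implements_def)
  then show ?thesis using set_pmf_not_empty by (metis subset_singletonD)
qed

lemma deviation_support_subset_LZ_of_worst_outcome: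
  assumes "lam \<in> MNE u M g th" and "set_pmf (induced g lam) = {z0}"
    and worst: "\<And>z. u i th z0 \<le> u i th z" and "set_pmf mu \<subseteq> M i"
  shows "set_pmf (induced g (lam(i := mu))) \<subseteq> LZ u i (return_pmf z0) th"
proof
  fix z assume z: "z \<in> set_pmf (induced g (lam(i := mu)))"
  have "EU u i th (induced g (lam(i := mu))) \<le> EU u i th (induced g lam)"
    using assms(1,4) by (auto simp: MNE_def)
  also have "\<dots> = u i th z0"
    using assms(2) by (intro EU_eq_of_support) auto
  finally have "u i th z = u i th z0"
    using support_eq_min_if_EU_le_min[of "u i th z0" u i th, OF worst _ z] by blast
  then show "z \<in> LZ u i (return_pmf z0) th"
    by (simp add: LZ_return_pmf)
qed

lemma MNE_if_deviations_in_max_set: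
  assumes max_set: "is_i_theta_max_set u i th E" and "l \<in> mixed_profiles M"
    and dev: "\<And>mu. set_pmf mu \<subseteq> M i \<Longrightarrow> set_pmf (induced g (l(i := mu))) \<subseteq> E"
  shows "l \<in> MNE u M g th"
proof -
  obtain e where "e \<in> E" using max_set by (auto simp: is_i_theta_max_set_def)
  have l_in_E: "set_pmf (induced g l) \<subseteq> E"
    using dev[of "l i"] \<open>l \<in> mixed_profiles M\<close> by (simp add: mixed_profiles_def)
  have "EU u k th (induced g (l(k := mu))) \<le> EU u k th (induced g l)"
    if mu: "set_pmf mu \<subseteq> M k" for k mu
  proof (cases "k = i")
    case True
    have indiff: "u i th z = u i th e" if "z \<in> E" for z
      using max_set \<open>e \<in> E\<close> that
      by (fastforce simp: is_i_theta_max_set_def argmax_on_def intro: order_antisym)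
    show ?thesis
      using True dev[OF mu[unfolded True]] l_in_E indiff
      by (simp add: EU_eq_of_support subset_iff)
  next
    case False
    have top: "z \<in> E \<Longrightarrow> u k th z' \<le> u k th z" for z z'
      using max_set False unfolding is_i_theta_max_set_def argmax_on_def by blast
    have "EU u k th (induced g (l(k := mu))) \<le> u k th e"
      using top[OF \<open>e \<in> E\<close>] by (intro EU_le_of_support)
    also have "\<dots> = EU u k th (induced g l)"
      using l_in_E top \<open>e \<in> E\<close> by (intro EU_eq_of_support[symmetric]) (auto intro: order_antisym)
    finally show ?thesis .
  qed
  then show ?thesis using \<open>l \<in> mixed_profiles M\<close> by (simp add: MNE_def)
qed

theorem lemma1:
  fixes u :: "'ag::finite \<Rightarrow> 'st::countable \<Rightarrow> 'z::finite \<Rightarrow> real"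
    and M :: "'ag \<Rightarrow> 'm::countable set"
    and g :: "('ag \<Rightarrow> 'm) \<Rightarrow> 'z pmf"
    and f :: "'st \<Rightarrow> 'z"
    and i :: 'ag and th :: 'st and lam :: "'ag \<Rightarrow> 'm pmf"
  assumes "CARD('ag) \<ge> 3"
    and "mixed_nash_implements u M g f"
    and "lam \<in> MNE u M g th"
    and "f th \<in> {z. \<forall>z'. u i th z \<le> u i th z'}"
    and "is_i_max_set u i (LZ u i (return_pmf (f th)) th)"
  shows "(\<Union>mi\<in>M i. set_pmf (induced g (lam(i := return_pmf mi)))) = {f th}"
proof -
  have lam_profile: "lam \<in> mixed_profiles M" using assms(3) by (simp add: MNE_def)
  have lam_outcome: "set_pmf (induced g lam) = {f th}"
    using set_pmf_induced_if_implements[OF assms(2,3)] .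
  obtain th' where "is_i_theta_max_set u i th' (LZ u i (return_pmf (f th)) th)"
    using assms(5) by (auto simp: is_i_max_set_def)
  then have MNE_th': "lam(i := mu) \<in> MNE u M g th'" if "set_pmf mu \<subseteq> M i" for mu
  proof (rule MNE_if_deviations_in_max_set)
    show "lam(i := mu) \<in> mixed_profiles M"
      using that lam_profile by (simp add: mixed_profiles_def)
    show "set_pmf (induced g ((lam(i := mu))(i := mu'))) \<subseteq> LZ u i (return_pmf (f th)) th"
      if "set_pmf mu' \<subseteq> M i" for mu'
      using deviation_support_subset_LZ_of_worst_outcome[OF assms(3) lam_outcome _ that] assms(4)
      by simp
  qed
  have "f th' = f th"
    using set_pmf_induced_if_implements[OF assms(2) MNE_th'[of "lam i"]] lam_profile lam_outcome
    by (simp add: mixed_profiles_def)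
  then have pure: "set_pmf (induced g (lam(i := return_pmf m))) = {f th}" if "m \<in> M i" for m
    using set_pmf_induced_if_implements[OF assms(2) MNE_th'[of "return_pmf m"]] that by simp
  obtain m0 where "m0 \<in> M i"
    using lam_profile set_pmf_not_empty[of "lam i"] by (auto simp: mixed_profiles_def)
  then show ?thesis using pure by blast
qed

end
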